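(* Let $\Gamma$ be a connected highly-regular graph. Then $\mathrm{I}(\Gamma)=\operatorname{diam}(\Gamma)+1$ if and only if $\Gamma$ is distance-regular.
   Context: All graphs are finite, undirected, without loops or multiple edges; $d(u,v)$, $\operatorname{diam}(\Gamma)$ and $D_i(u)=\{v:d(u,v)=i\}$ denote graph distance, diameter and distance spheres. A graph $\Gamma$ of order $n$ is highly-regular with collapsed adjacency matrix (CAM) $C=[c_{i,j}]_{1\le i,j\le m}$, where $2\le m<n$ (the value $m=n$ is allowed only when $n=2$), if for every vertex $u$ there is a partition of $V(\Gamma)$ into nonempty sets $V_1(u)=\{u\},V_2(u),\dots,V_m(u)$ such that for all $i,j$, every vertex $y\in V_j(u)$ is adjacent to exactly $c_{i,j}$ vertices of $V_i(u)$. The index $\mathrm{I}(\Gamma)$ of a highly-regular graph $\Gamma$ is the least $m$ such that $\Gamma$ is highly-regular with some CAM of size $m\times m$. A connected graph $\Gamma$ is distance-regular if for all $u,v$ the numbers $|D_1(v)\cap D_{i-1}(u)|$, $|D_1(v)\cap D_i(u)|$, $|D_1(v)\cap D_{i+1}(u)|$ depend only on $i=d(u,v)$. *)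

theory Defs
  imports Main
begin

definition simple_graph :: "'a set \<Rightarrow> ('a \<Rightarrow> 'a \<Rightarrow> bool) \<Rightarrow> bool" where
  "simple_graph V E \<longleftrightarrow> finite V \<and> (\<forall>x y. E x y \<longrightarrow> x \<in> V \<and> y \<in> V)
     \<and> (\<forall>x y. E x y \<longrightarrow> E y x) \<and> (\<forall>x. \<not> E x x)"

definition adj_rel :: "('a \<Rightarrow> 'a \<Rightarrow> bool) \<Rightarrow> ('a \<times> 'a) set" where
  "adj_rel E = {(x, y). E x y}"

definition gdist :: "('a \<Rightarrow> 'a \<Rightarrow> bool) \<Rightarrow> 'a \<Rightarrow> 'a \<Rightarrow> nat" where
  "gdist E u v = (LEAST k. (u, v) \<in> adj_rel E ^^ k)"

definition gconnected :: "'a set \<Rightarrow> ('a \<Rightarrow> 'a \<Rightarrow> bool) \<Rightarrow> bool" where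
  "gconnected V E \<longleftrightarrow> V \<noteq> {} \<and> (\<forall>u\<in>V. \<forall>v\<in>V. \<exists>k. (u, v) \<in> adj_rel E ^^ k)"

definition diam :: "'a set \<Rightarrow> ('a \<Rightarrow> 'a \<Rightarrow> bool) \<Rightarrow> nat" where
  "diam V E = Max {gdist E u v | u v. u \<in> V \<and> v \<in> V}"

definition sphere :: "'a set \<Rightarrow> ('a \<Rightarrow> 'a \<Rightarrow> bool) \<Rightarrow> nat \<Rightarrow> 'a \<Rightarrow> 'a set" where
  "sphere V E i u = {v \<in> V. gdist E u v = i}"

definition distance_regular :: "'a set \<Rightarrow> ('a \<Rightarrow> 'a \<Rightarrow> bool) \<Rightarrow> bool" where
  "distance_regular V E \<longleftrightarrow> gconnected V E \<and>
     (\<forall>u\<in>V. \<forall>v\<in>V. \<forall>u'\<in>V. \<forall>v'\<in>V. gdist E u v = gdist E u' v' \<longrightarrow>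
        (let i = gdist E u v in
          card (sphere V E 1 v \<inter> sphere V E (i - 1) u) = card (sphere V E 1 v' \<inter> sphere V E (i - 1) u')
        \<and> card (sphere V E 1 v \<inter> sphere V E i u) = card (sphere V E 1 v' \<inter> sphere V E i u')
        \<and> card (sphere V E 1 v \<inter> sphere V E (i + 1) u) = card (sphere V E 1 v' \<inter> sphere V E (i + 1) u')))"

definition hr_cam :: "'a set \<Rightarrow> ('a \<Rightarrow> 'a \<Rightarrow> bool) \<Rightarrow> nat \<Rightarrow> (nat \<Rightarrow> nat \<Rightarrow> nat) \<Rightarrow> bool" where
  "hr_cam V E m C \<longleftrightarrow>
     2 \<le> m \<and> (m < card V \<or> (m = card V \<and> card V = 2)) \<and>
     (\<forall>u\<in>V. \<exists>P :: nat \<Rightarrow> 'a set.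
        P 1 = {u} \<and> (\<forall>i\<in>{1..m}. P i \<noteq> {}) \<and> (\<Union>i\<in>{1..m}. P i) = V \<and>
        (\<forall>i\<in>{1..m}. \<forall>j\<in>{1..m}. i \<noteq> j \<longrightarrow> P i \<inter> P j = {}) \<and>
        (\<forall>i\<in>{1..m}. \<forall>j\<in>{1..m}. \<forall>y\<in>P j. card {x \<in> P i. E x y} = C i j))"

definition highly_regular :: "'a set \<Rightarrow> ('a \<Rightarrow> 'a \<Rightarrow> bool) \<Rightarrow> bool" where
  "highly_regular V E \<longleftrightarrow> (\<exists>m C. hr_cam V E m C)"

definition hr_index :: "'a set \<Rightarrow> ('a \<Rightarrow> 'a \<Rightarrow> bool) \<Rightarrow> nat" where
  "hr_index V E = (LEAST m. \<exists>C. hr_cam V E m C)"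

end

theory Submission
  imports Defs
begin

text \<open>
  For a partition of \<open>V\<close> around \<open>u\<close> with collapsed adjacency matrix \<open>C\<close>, the distance from \<open>u\<close>
  to a vertex of class \<open>j\<close> depends only on \<open>C\<close>: it is the distance from class 1 to class \<open>j\<close> in the
  digraph on classes with an arc \<open>i \<rightarrow> j\<close> whenever \<open>c\<^sub>i\<^sub>j > 0\<close>, because a vertex is at distance
  at most \<open>k + 1\<close> iff it is at distance at most \<open>k\<close> or has a neighbour at distance at most \<open>k\<close>.
  Hence the distances realised from every vertex are the same set of values, namely \<open>0..diam\<close>,
  each of which is the common distance of at least one class; so \<open>m \<ge> diam + 1\<close>, and if equality
  holds the classes are exactly the distance spheres, whose adjacency counts are then the entries of
  \<open>C\<close>, which is distance-regularity. Conversely, in a distance-regular graph the spheres around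
  each vertex form such a partition of size \<open>diam + 1\<close>.
\<close>

definition cam_partition ::
    "'a set \<Rightarrow> ('a \<Rightarrow> 'a \<Rightarrow> bool) \<Rightarrow> nat \<Rightarrow> (nat \<Rightarrow> nat \<Rightarrow> nat) \<Rightarrow> 'a \<Rightarrow> (nat \<Rightarrow> 'a set) \<Rightarrow> bool" where
  "cam_partition V E m C u P \<longleftrightarrow> P 1 = {u} \<and> (\<forall>i\<in>{1..m}. P i \<noteq> {}) \<and> (\<Union>i\<in>{1..m}. P i) = V \<and>
     (\<forall>i\<in>{1..m}. \<forall>j\<in>{1..m}. i \<noteq> j \<longrightarrow> P i \<inter> P j = {}) \<and>
     (\<forall>i\<in>{1..m}. \<forall>j\<in>{1..m}. \<forall>y\<in>P j. card {x \<in> P i. E x y} = C i j)"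

lemma hr_cam_iff_cam_partition:
  "hr_cam V E m C \<longleftrightarrow> 2 \<le> m \<and> (m < card V \<or> (m = card V \<and> card V = 2)) \<and>
     (\<forall>u\<in>V. \<exists>P. cam_partition V E m C u P)"
  unfolding hr_cam_def cam_partition_def by simp

lemma gdist_le: "(u, v) \<in> adj_rel E ^^ k \<Longrightarrow> gdist E u v \<le> k"
  unfolding gdist_def by (rule Least_le)

fun cam_reach :: "(nat \<Rightarrow> nat \<Rightarrow> nat) \<Rightarrow> nat \<Rightarrow> nat \<Rightarrow> nat \<Rightarrow> bool" where
  "cam_reach C m 0 j \<longleftrightarrow> j = 1"
| "cam_reach C m (Suc k) j \<longleftrightarrow> cam_reach C m k j \<or> (\<exists>i\<in>{1..m}. cam_reach C m k i \<and> 0 < C i j)"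

definition cam_dist :: "(nat \<Rightarrow> nat \<Rightarrow> nat) \<Rightarrow> nat \<Rightarrow> nat \<Rightarrow> nat" where
  "cam_dist C m j = (LEAST k. cam_reach C m k j)"

lemma hr_index_eq_iff:
  assumes "highly_regular V E" and "\<And>m C. hr_cam V E m C \<Longrightarrow> n \<le> m"
  shows "hr_index V E = n \<longleftrightarrow> (\<exists>C. hr_cam V E n C)"
proof
  have "\<exists>C. hr_cam V E (hr_index V E) C"
    unfolding hr_index_def using assms(1) unfolding highly_regular_def by (rule LeastI_ex)
  then show "hr_index V E = n \<Longrightarrow> \<exists>C. hr_cam V E n C" by simp
next
  show "\<exists>C. hr_cam V E n C \<Longrightarrow> hr_index V E = n"
    unfolding hr_index_def using assms(2) by (intro Least_equality) blast+
qed

locale connected_graph =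
  fixes V :: "'a set" and E :: "'a \<Rightarrow> 'a \<Rightarrow> bool"
  assumes simple: "simple_graph V E" and connected: "gconnected V E"
begin

lemma finite_vertices: "finite V"
  using simple unfolding simple_graph_def by blast

lemma adj_vertices: "E x y \<Longrightarrow> x \<in> V" "E x y \<Longrightarrow> y \<in> V"
  using simple unfolding simple_graph_def by blast+

lemma adj_sym: "E x y \<Longrightarrow> E y x"
  using simple unfolding simple_graph_def by blast

lemma adj_irrefl: "\<not> E x x"
  using simple unfolding simple_graph_def by blast

lemma vertices_nonempty: "V \<noteq> {}"
  using connected unfolding gconnected_def by blast

lemma walk_gdist: "u \<in> V \<Longrightarrow> v \<in> V \<Longrightarrow> (u, v) \<in> adj_rel E ^^ gdist E u v"
  using connected unfolding gconnected_def gdist_def by (metis LeastI)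

lemma gdist_eq_0_iff: "u \<in> V \<Longrightarrow> v \<in> V \<Longrightarrow> gdist E u v = 0 \<longleftrightarrow> u = v"
  using walk_gdist[of u v] gdist_le[of u u 0 E] by auto

lemma gdist_le_Suc_iff:
  assumes u: "u \<in> V" and y: "y \<in> V"
  shows "gdist E u y \<le> Suc k \<longleftrightarrow> gdist E u y \<le> k \<or> (\<exists>x\<in>V. E x y \<and> gdist E u x \<le> k)"
proof
  assume le: "gdist E u y \<le> Suc k"
  show "gdist E u y \<le> k \<or> (\<exists>x\<in>V. E x y \<and> gdist E u x \<le> k)"
  proof (cases "gdist E u y \<le> k")
    case False
    with le have "gdist E u y = Suc k" by simp
    with walk_gdist[OF u y] have "(u, y) \<in> adj_rel E ^^ Suc k" by simp
    then obtain x where "(u, x) \<in> adj_rel E ^^ k" "(x, y) \<in> adj_rel E" by (rule relpow_Suc_E)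
    moreover from this(2) have "E x y" by (simp add: adj_rel_def)
    ultimately show ?thesis using gdist_le[of u x k] adj_vertices(1)[of x y] by blast
  qed simp
next
  assume "gdist E u y \<le> k \<or> (\<exists>x\<in>V. E x y \<and> gdist E u x \<le> k)"
  moreover have "gdist E u y \<le> Suc (gdist E u x)" if "x \<in> V" "E x y" for x
  proof -
    have "(u, y) \<in> adj_rel E ^^ Suc (gdist E u x)"
      using walk_gdist[OF u that(1)] that(2) by (auto simp: adj_rel_def)
    then show ?thesis by (rule gdist_le)
  qed
  ultimately show "gdist E u y \<le> Suc k" by force
qed

lemma gdist_adj_le: "u \<in> V \<Longrightarrow> E x y \<Longrightarrow> gdist E u y \<le> Suc (gdist E u x)"
  using gdist_le_Suc_iff[of u y "gdist E u x"] adj_vertices by blast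

lemma gdist_eq_1_iff:
  assumes u: "u \<in> V" and v: "v \<in> V"
  shows "gdist E u v = 1 \<longleftrightarrow> E u v"
proof -
  have "gdist E u v \<le> Suc 0 \<longleftrightarrow> u = v \<or> E u v"
    using gdist_le_Suc_iff[OF u v, of 0] gdist_eq_0_iff[OF u] u v by auto
  moreover have "gdist E u v = 1 \<longleftrightarrow> gdist E u v \<le> Suc 0 \<and> gdist E u v \<noteq> 0" by linarith
  ultimately show ?thesis using gdist_eq_0_iff[OF u v] adj_irrefl by auto
qed

lemma gdist_SucE:
  assumes "u \<in> V" "w \<in> V" "gdist E u w = Suc n"
  obtains x where "x \<in> V" "E x w" "gdist E u x = n"
proof -
  obtain x where x: "x \<in> V" "E x w" "gdist E u x \<le> n"
    using gdist_le_Suc_iff[OF assms(1,2), of n] assms(3) by auto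
  with gdist_adj_le[OF assms(1) x(2)] assms(3) have "gdist E u x = n" by simp
  with x that show thesis by blast
qed

lemma gdist_intermediate: "u \<in> V \<Longrightarrow> v \<in> V \<Longrightarrow> k \<le> gdist E u v \<Longrightarrow> \<exists>w\<in>V. gdist E u w = k"
proof (induction "gdist E u v" arbitrary: v)
  case 0
  then show ?case by auto
next
  case (Suc n)
  show ?case
  proof (cases "k = Suc n")
    case True
    with Suc show ?thesis by auto
  next
    case False
    obtain x where x: "x \<in> V" "gdist E u x = n" using gdist_SucE Suc.prems(1,2) Suc.hyps(2) by metis
    with False Suc.prems(3) Suc.hyps(2) have "k \<le> gdist E u x" by simp
    with Suc.hyps(1)[OF x(2)[symmetric] Suc.prems(1) x(1)] show ?thesis .
  qed
qed

lemma sphere_1_inter: "v \<in> V \<Longrightarrow> A \<subseteq> V \<Longrightarrow> sphere V E 1 v \<inter> A = {x \<in> A. E x v}"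
  unfolding sphere_def using gdist_eq_1_iff adj_sym by blast

lemma diam_eq_Max_image: "diam V E = Max ((\<lambda>(u, v). gdist E u v) ` (V \<times> V))"
  unfolding diam_def by (rule arg_cong[where f = Max]) auto

lemma gdist_le_diam: "u \<in> V \<Longrightarrow> v \<in> V \<Longrightarrow> gdist E u v \<le> diam V E"
  unfolding diam_eq_Max_image using finite_vertices by (intro Max_ge) auto

lemma diam_attained: obtains u v where "u \<in> V" "v \<in> V" "gdist E u v = diam V E"
proof -
  have "diam V E \<in> (\<lambda>(u, v). gdist E u v) ` (V \<times> V)"
    unfolding diam_eq_Max_image using finite_vertices vertices_nonempty by (intro Max_in) auto
  with that show thesis by auto
qed

subsection \<open>Classes of a collapsed adjacency matrix are at a common distance\<close>

context
  fixes m C u P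
  assumes u: "u \<in> V" and P: "cam_partition V E m C u P"
begin

lemma cell_subset: "i \<in> {1..m} \<Longrightarrow> P i \<subseteq> V"
  using P unfolding cam_partition_def by blast

lemma cell_cover:
  assumes "x \<in> V"
  obtains j where "j \<in> {1..m}" "x \<in> P j"
  using P assms that unfolding cam_partition_def by blast

lemma cell_1: "P 1 = {u}"
  using P unfolding cam_partition_def by simp

lemma cell_nonempty: "i \<in> {1..m} \<Longrightarrow> P i \<noteq> {}"
  using P unfolding cam_partition_def by simp

lemma cell_disjoint: "i \<in> {1..m} \<Longrightarrow> j \<in> {1..m} \<Longrightarrow> i \<noteq> j \<Longrightarrow> P i \<inter> P j = {}"
  using P unfolding cam_partition_def by simp

lemma card_cell_adj: "i \<in> {1..m} \<Longrightarrow> j \<in> {1..m} \<Longrightarrow> y \<in> P j \<Longrightarrow> card {x \<in> P i. E x y} = C i j"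
  using P unfolding cam_partition_def by simp

lemma gdist_le_iff_cam_reach:
  "j \<in> {1..m} \<Longrightarrow> y \<in> P j \<Longrightarrow> gdist E u y \<le> k \<longleftrightarrow> cam_reach C m k j"
proof (induction k arbitrary: j y)
  case 0
  have "1 \<in> {1..m}" using 0(1) by simp
  then have "u = y \<longleftrightarrow> j = 1"
    using cell_1 cell_disjoint[of 1 j] 0 by auto
  with 0 show ?case using gdist_eq_0_iff[OF u] cell_subset by auto
next
  case (Suc k)
  note card_adj = card_cell_adj[OF _ Suc.prems]
  have "(\<exists>x\<in>V. E x y \<and> gdist E u x \<le> k) \<longleftrightarrow> (\<exists>i\<in>{1..m}. cam_reach C m k i \<and> 0 < C i j)"
  proof
    assume "\<exists>x\<in>V. E x y \<and> gdist E u x \<le> k"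
    then obtain x i where x: "E x y" "gdist E u x \<le> k" and i: "i \<in> {1..m}" "x \<in> P i"
      by (metis cell_cover)
    have "finite {x \<in> P i. E x y}"
      using cell_subset[OF i(1)] finite_vertices by (auto intro: finite_subset)
    with x i have "0 < card {x \<in> P i. E x y}" by (auto simp: card_gt_0_iff)
    then have "0 < C i j" using card_adj[OF i(1)] by simp
    with Suc.IH[OF i] x i show "\<exists>i\<in>{1..m}. cam_reach C m k i \<and> 0 < C i j" by blast
  next
    assume "\<exists>i\<in>{1..m}. cam_reach C m k i \<and> 0 < C i j"
    then obtain i where i: "i \<in> {1..m}" "cam_reach C m k i" "0 < C i j" by blast
    then have "{x \<in> P i. E x y} \<noteq> {}" using card_adj[OF i(1)] by force
    then obtain x where "x \<in> P i" "E x y" by blast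
    with Suc.IH[OF i(1)] i cell_subset[OF i(1)] show "\<exists>x\<in>V. E x y \<and> gdist E u x \<le> k" by blast
  qed
  moreover have "y \<in> V" using cell_subset Suc.prems by blast
  ultimately show ?case using gdist_le_Suc_iff[OF u] Suc.IH[OF Suc.prems] by simp
qed

lemma gdist_cell:
  assumes "j \<in> {1..m}" "y \<in> P j"
  shows "gdist E u y = cam_dist C m j"
proof -
  have "cam_reach C m (gdist E u y) j" using gdist_le_iff_cam_reach[OF assms, of "gdist E u y"] by simp
  then have "cam_dist C m j \<le> gdist E u y" "cam_reach C m (cam_dist C m j) j"
    unfolding cam_dist_def by (auto intro: Least_le LeastI)
  then show ?thesis using gdist_le_iff_cam_reach[OF assms, of "cam_dist C m j"] by simp
qed

lemma gdist_image_cam_dist: "gdist E u ` V = cam_dist C m ` {1..m}"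
proof
  show "gdist E u ` V \<subseteq> cam_dist C m ` {1..m}"
  proof
    fix d assume "d \<in> gdist E u ` V"
    then obtain v j where "d = gdist E u v" "j \<in> {1..m}" "v \<in> P j" by (auto elim: cell_cover)
    then show "d \<in> cam_dist C m ` {1..m}" using gdist_cell by simp
  qed
  show "cam_dist C m ` {1..m} \<subseteq> gdist E u ` V"
  proof
    fix d assume "d \<in> cam_dist C m ` {1..m}"
    then obtain j y where "d = cam_dist C m j" "j \<in> {1..m}" "y \<in> P j" using cell_nonempty by blast
    then have "y \<in> V" "d = gdist E u y" using gdist_cell cell_subset by auto
    then show "d \<in> gdist E u ` V" by blast
  qed
qed

end

lemma gdist_image_diam:
  assumes h: "hr_cam V E m C" and u: "u \<in> V"
  shows "gdist E u ` V = {0..diam V E}"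
proof -
  obtain u0 v0 where uv0: "u0 \<in> V" "v0 \<in> V" "gdist E u0 v0 = diam V E"
    by (rule diam_attained)
  have "gdist E u0 ` V = {0..diam V E}"
    using gdist_le_diam[OF uv0(1)] gdist_intermediate[OF uv0(1,2)] uv0(3) by fastforce
  moreover obtain P0 P where "cam_partition V E m C u0 P0" "cam_partition V E m C u P"
    using h u uv0(1) unfolding hr_cam_iff_cam_partition by blast
  then have "gdist E u ` V = gdist E u0 ` V"
    using gdist_image_cam_dist[OF u] gdist_image_cam_dist[OF uv0(1)] by simp
  ultimately show ?thesis by simp
qed

lemma diam_Suc_le_cam_size: "hr_cam V E m C \<Longrightarrow> diam V E + 1 \<le> m"
proof -
  assume h: "hr_cam V E m C"
  obtain u P where u: "u \<in> V" and P: "cam_partition V E m C u P"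
    using h vertices_nonempty unfolding hr_cam_iff_cam_partition by blast
  have "diam V E + 1 = card (cam_dist C m ` {1..m})"
    using gdist_image_diam[OF h u] gdist_image_cam_dist[OF u P] by simp
  also have "\<dots> \<le> m" using card_image_le[of "{1..m}" "cam_dist C m"] by simp
  finally show ?thesis .
qed

lemma hr_cam_diam_size:
  assumes "hr_cam V E m C"
  shows "2 \<le> diam V E + 1 \<and> (diam V E + 1 < card V \<or> (diam V E + 1 = card V \<and> card V = 2))"
proof -
  have m: "2 \<le> m" "m < card V \<or> (m = card V \<and> card V = 2)"
    using assms unfolding hr_cam_iff_cam_partition by auto
  then have "\<not> card V \<le> Suc 0" by linarith
  then obtain a b where ab: "a \<in> V" "b \<in> V" "a \<noteq> b"
    using card_le_Suc0_iff_eq[OF finite_vertices] by blast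
  then have "gdist E a b \<noteq> 0" using gdist_eq_0_iff by blast
  then have "1 \<le> diam V E" using gdist_le_diam[OF ab(1,2)] by linarith
  with m diam_Suc_le_cam_size[OF assms] show ?thesis by linarith
qed

lemma sphere_1_inter_sphere_eq_empty:
  assumes "u \<in> V" "v \<in> V" "Suc (gdist E u v) < s \<or> Suc s < gdist E u v"
  shows "sphere V E 1 v \<inter> sphere V E s u = {}"
proof -
  have False if "x \<in> sphere V E s u" "E x v" for x
    using gdist_adj_le[OF assms(1) that(2)] gdist_adj_le[OF assms(1) adj_sym[OF that(2)]] that(1) assms(3)
    unfolding sphere_def by auto
  then show ?thesis using sphere_1_inter[OF assms(2), of "sphere V E s u"] unfolding sphere_def by auto
qed

text \<open>The definition of distance-regularity constrains only the spheres at distance \<open>i - 1\<close>, \<open>i\<close>,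
  \<open>i + 1\<close>; all other spheres meet the neighbourhood of \<open>v\<close> trivially.\<close>

lemma distance_regular_iff_card_sphere_inter:
  "distance_regular V E \<longleftrightarrow> (\<forall>u\<in>V. \<forall>v\<in>V. \<forall>u'\<in>V. \<forall>v'\<in>V. gdist E u v = gdist E u' v' \<longrightarrow>
     (\<forall>s. card (sphere V E 1 v \<inter> sphere V E s u) = card (sphere V E 1 v' \<inter> sphere V E s u')))"
  (is "_ \<longleftrightarrow> ?all")
proof
  assume dr: "distance_regular V E"
  show ?all
  proof (intro ballI impI allI)
    fix u v u' v' s assume V: "u \<in> V" "v \<in> V" "u' \<in> V" "v' \<in> V" and eq: "gdist E u v = gdist E u' v'"
    let ?t = "gdist E u v"
    show "card (sphere V E 1 v \<inter> sphere V E s u) = card (sphere V E 1 v' \<inter> sphere V E s u')"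
    proof (cases "s = ?t - 1 \<or> s = ?t \<or> s = ?t + 1")
      case True
      from dr V eq have
        "card (sphere V E 1 v \<inter> sphere V E (?t - 1) u) = card (sphere V E 1 v' \<inter> sphere V E (?t - 1) u')
       \<and> card (sphere V E 1 v \<inter> sphere V E ?t u) = card (sphere V E 1 v' \<inter> sphere V E ?t u')
       \<and> card (sphere V E 1 v \<inter> sphere V E (?t + 1) u) = card (sphere V E 1 v' \<inter> sphere V E (?t + 1) u')"
        unfolding distance_regular_def Let_def by blast
      with True show ?thesis by auto
    next
      case False
      then have "Suc ?t < s \<or> Suc s < ?t" by linarith
      with V eq show ?thesis using sphere_1_inter_sphere_eq_empty[of u v s] sphere_1_inter_sphere_eq_empty[of u' v' s]
        by simp
    qed
  qed
next
  assume all: ?all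
  have card_eq: "card (sphere V E 1 v \<inter> sphere V E s u) = card (sphere V E 1 v' \<inter> sphere V E s u')"
    if "u \<in> V" "v \<in> V" "u' \<in> V" "v' \<in> V" "gdist E u v = gdist E u' v'" for u v u' v' s
    using all[rule_format, OF that] .
  show "distance_regular V E" unfolding distance_regular_def Let_def
    by (intro conjI ballI impI connected) (rule card_eq; assumption)+
qed

context
  fixes C
  assumes h: "hr_cam V E (diam V E + 1) C"
begin

lemma inj_on_cam_dist: "inj_on (cam_dist C (diam V E + 1)) {1..diam V E + 1}"
proof -
  obtain u P where u: "u \<in> V" and P: "cam_partition V E (diam V E + 1) C u P"
    using h vertices_nonempty unfolding hr_cam_iff_cam_partition by blast
  show ?thesis
    using gdist_image_diam[OF h u] gdist_image_cam_dist[OF u P] by (intro eq_card_imp_inj_on) simp_all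
qed

lemma sphere_cam_dist_eq_cell:
  assumes u: "u \<in> V" and P: "cam_partition V E (diam V E + 1) C u P" and j: "j \<in> {1..diam V E + 1}"
  shows "sphere V E (cam_dist C (diam V E + 1) j) u = P j"
proof
  show "P j \<subseteq> sphere V E (cam_dist C (diam V E + 1) j) u"
    using gdist_cell[OF u P j] cell_subset[OF u P j] unfolding sphere_def by auto
  show "sphere V E (cam_dist C (diam V E + 1) j) u \<subseteq> P j"
  proof
    fix x assume "x \<in> sphere V E (cam_dist C (diam V E + 1) j) u"
    then have x: "x \<in> V" "gdist E u x = cam_dist C (diam V E + 1) j" unfolding sphere_def by auto
    obtain k where k: "k \<in> {1..diam V E + 1}" "x \<in> P k" using cell_cover[OF u P x(1)] .
    then have "k = j" using gdist_cell[OF u P k] x(2) inj_onD[OF inj_on_cam_dist] j by metis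
    with k show "x \<in> P j" by simp
  qed
qed

lemma card_sphere_inter_cam:
  assumes u: "u \<in> V" and P: "cam_partition V E (diam V E + 1) C u P"
    and i: "i \<in> {1..diam V E + 1}" and j: "j \<in> {1..diam V E + 1}" and v: "v \<in> P j"
  shows "card (sphere V E 1 v \<inter> sphere V E (cam_dist C (diam V E + 1) i) u) = C i j"
proof -
  have "v \<in> V" using cell_subset[OF u P j] v by blast
  then have "sphere V E 1 v \<inter> P i = {x \<in> P i. E x v}"
    using sphere_1_inter cell_subset[OF u P i] by blast
  then show ?thesis
    using sphere_cam_dist_eq_cell[OF u P i] card_cell_adj[OF u P i j v] by simp
qed

lemma distance_regular_if_hr_cam_diam: "distance_regular V E"
  unfolding distance_regular_iff_card_sphere_inter
proof (intro ballI impI allI)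
  let ?m = "diam V E + 1"
  fix u v u' v' s assume V: "u \<in> V" "v \<in> V" "u' \<in> V" "v' \<in> V" and eq: "gdist E u v = gdist E u' v'"
  obtain P P' where P: "cam_partition V E ?m C u P" and P': "cam_partition V E ?m C u' P'"
    using h V unfolding hr_cam_iff_cam_partition by blast
  obtain j j' where j: "j \<in> {1..?m}" "v \<in> P j" and j': "j' \<in> {1..?m}" "v' \<in> P' j'"
    by (metis cell_cover P P' V)
  have "cam_dist C ?m j' = cam_dist C ?m j"
    using gdist_cell[OF V(1) P j] gdist_cell[OF V(3) P' j'] eq by simp
  then have "j' = j" using inj_onD[OF inj_on_cam_dist] j(1) j'(1) by blast
  show "card (sphere V E 1 v \<inter> sphere V E s u) = card (sphere V E 1 v' \<inter> sphere V E s u')"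
  proof (cases "s \<in> gdist E u ` V")
    case True
    then obtain i where "i \<in> {1..?m}" "s = cam_dist C ?m i"
      using gdist_image_cam_dist[OF V(1) P] by blast
    then show ?thesis using card_sphere_inter_cam[OF V(1) P _ j] card_sphere_inter_cam[OF V(3) P' _ j'] \<open>j' = j\<close>
      by simp
  next
    case False
    then have "s \<notin> gdist E u' ` V" using gdist_image_diam[OF h] V by metis
    with False have "sphere V E s u = {}" "sphere V E s u' = {}" unfolding sphere_def by auto
    then show ?thesis by simp
  qed
qed

end

lemma gdist_realised:
  assumes "hr_cam V E m C" "u \<in> V" "k \<le> diam V E"
  obtains v where "v \<in> V" "gdist E u v = k"
proof -
  have "k \<in> gdist E u ` V" using gdist_image_diam[OF assms(1,2)] assms(3) by simp
  with that show thesis by blast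
qed

text \<open>The intersection numbers are read off at a single base vertex \<open>a\<close>; distance-regularity
  makes them valid around every vertex.\<close>

definition sphere_matrix :: "'a \<Rightarrow> nat \<Rightarrow> nat \<Rightarrow> nat" where
  "sphere_matrix a i j =
     card (sphere V E 1 (SOME y. y \<in> V \<and> gdist E a y = j - 1) \<inter> sphere V E (i - 1) a)"

lemma spheres_cam_partition:
  assumes dr: "distance_regular V E" and h0: "hr_cam V E m0 C0" and a: "a \<in> V" and u: "u \<in> V"
  shows "cam_partition V E (diam V E + 1) (sphere_matrix a) u (\<lambda>i. sphere V E (i - 1) u)"
  unfolding cam_partition_def
proof (intro conjI ballI impI)
  let ?m = "diam V E + 1"
  show "sphere V E (1 - 1) u = {u}" using gdist_eq_0_iff[OF u] u unfolding sphere_def by auto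
  have "v \<in> sphere V E (Suc (gdist E u v) - 1) u" "Suc (gdist E u v) \<in> {1..?m}" if "v \<in> V" for v
    using that gdist_le_diam[OF u that] unfolding sphere_def by auto
  then show "(\<Union>i\<in>{1..?m}. sphere V E (i - 1) u) = V"
    unfolding sphere_def by blast
next
  fix i assume "i \<in> {1..diam V E + 1}"
  then have "i - 1 \<le> diam V E" by auto
  then obtain v where "v \<in> V" "gdist E u v = i - 1" by (rule gdist_realised[OF h0 u])
  then show "sphere V E (i - 1) u \<noteq> {}" unfolding sphere_def by auto
next
  fix i j assume "i \<in> {1..diam V E + 1}" "j \<in> {1..diam V E + 1}" "i \<noteq> j"
  then show "sphere V E (i - 1) u \<inter> sphere V E (j - 1) u = {}" unfolding sphere_def by auto
next
  fix i j y assume j: "j \<in> {1..diam V E + 1}" and y: "y \<in> sphere V E (j - 1) u"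
  let ?rep = "SOME y. y \<in> V \<and> gdist E a y = j - 1"
  have "j - 1 \<le> diam V E" using j by auto
  then obtain v where "v \<in> V" "gdist E a v = j - 1" by (rule gdist_realised[OF h0 a])
  then have "\<exists>y. y \<in> V \<and> gdist E a y = j - 1" by blast
  then have rep: "?rep \<in> V" "gdist E a ?rep = j - 1" by (metis (mono_tags, lifting) someI_ex)+
  from y have yV: "y \<in> V" "gdist E u y = gdist E a ?rep" using rep unfolding sphere_def by auto
  have "{x \<in> sphere V E (i - 1) u. E x y} = sphere V E 1 y \<inter> sphere V E (i - 1) u"
    using sphere_1_inter[OF yV(1), of "sphere V E (i - 1) u"] unfolding sphere_def by blast
  also have "card \<dots> = sphere_matrix a i j"
    using dr u yV a rep unfolding sphere_matrix_def distance_regular_iff_card_sphere_inter by blast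
  finally show "card {x \<in> sphere V E (i - 1) u. E x y} = sphere_matrix a i j" .
qed

lemma hr_cam_diam_if_distance_regular:
  assumes "distance_regular V E" and h0: "hr_cam V E m0 C0"
  shows "\<exists>C. hr_cam V E (diam V E + 1) C"
proof -
  obtain a where "a \<in> V" using vertices_nonempty by blast
  with spheres_cam_partition[OF assms] have "hr_cam V E (diam V E + 1) (sphere_matrix a)"
    using hr_cam_diam_size[OF h0] unfolding hr_cam_iff_cam_partition by blast
  then show ?thesis by blast
qed

lemma hr_cam_diam_iff_distance_regular:
  "highly_regular V E \<Longrightarrow> (\<exists>C. hr_cam V E (diam V E + 1) C) \<longleftrightarrow> distance_regular V E"
  unfolding highly_regular_def
  using distance_regular_if_hr_cam_diam hr_cam_diam_if_distance_regular by blast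

end

theorem corollary3p2:
  fixes V :: "'a set" and E :: "'a \<Rightarrow> 'a \<Rightarrow> bool"
  assumes "simple_graph V E" and "gconnected V E" and "highly_regular V E"
  shows "hr_index V E = diam V E + 1 \<longleftrightarrow> distance_regular V E"
proof -
  interpret connected_graph V E using assms(1,2) by unfold_locales
  have "hr_index V E = diam V E + 1 \<longleftrightarrow> (\<exists>C. hr_cam V E (diam V E + 1) C)"
    using assms(3) diam_Suc_le_cam_size by (rule hr_index_eq_iff)
  also have "\<dots> \<longleftrightarrow> distance_regular V E"
    using assms(3) by (rule hr_cam_diam_iff_distance_regular)
  finally show ?thesis .
qed

end
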